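(* In the finite-sample setting, run the evaluation algorithm with $\rho_t=\widehat d_t^{\pi^\beta}$ and the finite-sample matrix estimation subroutine. There exists an absolute constant $C>0$ such that for $\delta\in(0,1)$, with probability at least $1-\delta$, \[ \big|\langle\rho_t,Z_t-Y_t\rangle\big|\le CH\sqrt{\frac{S\log(HS/\delta)}{K}}\qquad\text{for all }t\in[H]. \]
   Context: MDP: finite state space $\mathcal S$ ($S=|\mathcal S|$), finite action space $\mathcal A$ ($A=|\mathcal A|$), horizon $H$, transitions $P_t(\cdot\mid s,a)$, rewards $r_t:\mathcal S\times\mathcal A\to[0,1]$, initial distribution $\mu_1$; $\pi^\theta$ target and $\pi^\beta$ behavior policy. Functions on $\mathcal S\times\mathcal A$ are $S\times A$ matrices; $\langle X,Y\rangle=\sum_{s,a}X(s,a)Y(s,a)$. Finite-sample setting: $K$ independent trajectories $(s_t^k,a_t^k,r_t^k)$ generated by $\pi^\beta$; $n_t(s,a)=\sum_k\mathbb 1\{(s_t^k,a_t^k)=(s,a)\}$, $\widehat d_t^{\pi^\beta}=n_t/K$, $\widehat P_t(s'\mid s,a)=\frac1{n_t(s,a)}\sum_k\mathbb 1\{(s_t^k,a_t^k,s_{t+1}^k)=(s,a,s')\}$ for $n_t(s,a)>0$. Algorithm: $\widehat Q_{H+1}=0$; for $t=H,\dots,1$: $Z_t(s,a)=r_t(s,a)+\sum_{s',a'}\widehat P_t(s'\mid s,a)\pi^\theta_{t+1}(a'\mid s')\widehat Q_{t+1}(s',a')$ for $(s,a)\in\operatorname{supp}(\rho_t)$; $Y_t(s,a)=r_t(s,a)+\sum_{s',a'}P_t(s'\mid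 s,a)\pi^\theta_{t+1}(a'\mid s')\widehat Q_{t+1}(s',a')$; $\widehat Q_t$ a minimizer of $\|M\|_{\max}=\min_{M=UV^\top}\|U\|_{2\to\infty}\|V\|_{2\to\infty}$ ($\|\cdot\|_{2\to\infty}$ maximum row Euclidean norm) subject to $|\langle\rho_t,M-Z_t\rangle|\le|\langle\rho_t,Z_t-Y_t\rangle|$ and $\max_{s,a}|M(s,a)|\le H-t+1$. *)

theory Defs
  imports "HOL-Probability.Probability"
begin

(* States are 0..<S, actions are 0..<A (natural numbers), time steps 1..H.
   A trajectory is a list of (state, action) pairs for t = 1..H together with
   the final state s_{H+1}. *)

type_synonym traj = "(nat \<times> nat) list \<times> nat"

fun gen_traj :: "(nat \<Rightarrow> nat \<Rightarrow> nat pmf) \<Rightarrow> (nat \<Rightarrow> nat \<Rightarrow> nat \<Rightarrow> nat pmf)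
    \<Rightarrow> nat \<Rightarrow> nat \<Rightarrow> nat \<Rightarrow> traj pmf" where
  "gen_traj pb P t 0 s = return_pmf ([], s)"
| "gen_traj pb P t (Suc n) s =
     bind_pmf (pb t s) (\<lambda>a. bind_pmf (P t s a) (\<lambda>s'.
       map_pmf (\<lambda>(xs, f). ((s, a) # xs, f)) (gen_traj pb P (Suc t) n s')))"

definition traj_pmf :: "nat pmf \<Rightarrow> (nat \<Rightarrow> nat \<Rightarrow> nat pmf) \<Rightarrow> (nat \<Rightarrow> nat \<Rightarrow> nat \<Rightarrow> nat pmf)
    \<Rightarrow> nat \<Rightarrow> traj pmf" where
  "traj_pmf mu pb P H = bind_pmf mu (\<lambda>s. gen_traj pb P 1 H s)"

definition sample_pmf :: "nat \<Rightarrow> nat pmf \<Rightarrow> (nat \<Rightarrow> nat \<Rightarrow> nat pmf) \<Rightarrow> (nat \<Rightarrow> nat \<Rightarrow> nat \<Rightarrow> nat pmf)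
    \<Rightarrow> nat \<Rightarrow> (nat \<Rightarrow> traj) pmf" where
  "sample_pmf K mu pb P H = Pi_pmf {..<K} ([], 0) (\<lambda>_. traj_pmf mu pb P H)"

(* s_t and a_t of a trajectory, for t >= 1 *)
definition st :: "traj \<Rightarrow> nat \<Rightarrow> nat" where
  "st \<tau> t = (if t \<le> length (fst \<tau>) then fst (fst \<tau> ! (t - 1)) else snd \<tau>)"

definition act :: "traj \<Rightarrow> nat \<Rightarrow> nat" where
  "act \<tau> t = snd (fst \<tau> ! (t - 1))"

definition cnt :: "(nat \<Rightarrow> traj) \<Rightarrow> nat \<Rightarrow> nat \<Rightarrow> nat \<Rightarrow> nat \<Rightarrow> nat" where
  "cnt D K t s a = card {k \<in> {..<K}. st (D k) t = s \<and> act (D k) t = a}"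

definition cnt3 :: "(nat \<Rightarrow> traj) \<Rightarrow> nat \<Rightarrow> nat \<Rightarrow> nat \<Rightarrow> nat \<Rightarrow> nat \<Rightarrow> nat" where
  "cnt3 D K t s a s' = card {k \<in> {..<K}. st (D k) t = s \<and> act (D k) t = a \<and> st (D k) (Suc t) = s'}"

definition rho :: "(nat \<Rightarrow> traj) \<Rightarrow> nat \<Rightarrow> nat \<Rightarrow> nat \<Rightarrow> nat \<Rightarrow> real" where
  "rho D K t s a = real (cnt D K t s a) / real K"

(* hat P_t(s'|s,a), meaningful when n_t(s,a) > 0 *)
definition Phat :: "(nat \<Rightarrow> traj) \<Rightarrow> nat \<Rightarrow> nat \<Rightarrow> nat \<Rightarrow> nat \<Rightarrow> nat \<Rightarrow> real" where
  "Phat D K t s a s' = real (cnt3 D K t s a s') / real (cnt D K t s a)"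

definition inner_SA :: "nat \<Rightarrow> nat \<Rightarrow> (nat \<Rightarrow> nat \<Rightarrow> real) \<Rightarrow> (nat \<Rightarrow> nat \<Rightarrow> real) \<Rightarrow> real" where
  "inner_SA S A X Y = (\<Sum>s<S. \<Sum>a<A. X s a * Y s a)"

definition Vfun :: "nat \<Rightarrow> (nat \<Rightarrow> nat \<Rightarrow> nat pmf) \<Rightarrow> nat \<Rightarrow> (nat \<Rightarrow> nat \<Rightarrow> real) \<Rightarrow> nat \<Rightarrow> real" where
  "Vfun A pt t Q s' = (\<Sum>a'<A. pmf (pt t s') a' * Q s' a')"

(* Z_t, defined on supp(rho_t) = {n_t > 0}; set to 0 off the support (irrelevant) *)
definition Zmat :: "nat \<Rightarrow> nat \<Rightarrow> (nat \<Rightarrow> nat \<Rightarrow> nat \<Rightarrow> real) \<Rightarrow> (nat \<Rightarrow> nat \<Rightarrow> nat pmf)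
    \<Rightarrow> (nat \<Rightarrow> traj) \<Rightarrow> nat \<Rightarrow> nat \<Rightarrow> (nat \<Rightarrow> nat \<Rightarrow> real) \<Rightarrow> nat \<Rightarrow> nat \<Rightarrow> real" where
  "Zmat S A r pt D K t Qn s a =
     (if cnt D K t s a > 0
      then r t s a + (\<Sum>s'<S. Phat D K t s a s' * Vfun A pt (Suc t) Qn s')
      else 0)"

definition Ymat :: "nat \<Rightarrow> nat \<Rightarrow> (nat \<Rightarrow> nat \<Rightarrow> nat \<Rightarrow> real) \<Rightarrow> (nat \<Rightarrow> nat \<Rightarrow> nat pmf)
    \<Rightarrow> (nat \<Rightarrow> nat \<Rightarrow> nat \<Rightarrow> nat pmf) \<Rightarrow> nat \<Rightarrow> (nat \<Rightarrow> nat \<Rightarrow> real) \<Rightarrow> nat \<Rightarrow> nat \<Rightarrow> real" where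
  "Ymat S A r pt P t Qn s a =
     r t s a + (\<Sum>s'<S. pmf (P t s a) s' * Vfun A pt (Suc t) Qn s')"

definition row_norm :: "nat \<Rightarrow> nat \<Rightarrow> (nat \<Rightarrow> nat \<Rightarrow> real) \<Rightarrow> real" where
  "row_norm n k U = (MAX i \<in> {..<n}. sqrt (\<Sum>j<k. (U i j)\<^sup>2))"

definition max_norm :: "nat \<Rightarrow> nat \<Rightarrow> (nat \<Rightarrow> nat \<Rightarrow> real) \<Rightarrow> real" where
  "max_norm S A M = Inf {row_norm S k U * row_norm A k V | k U V.
      \<forall>s<S. \<forall>a<A. M s a = (\<Sum>j<k. U s j * V a j)}"

definition feasible :: "nat \<Rightarrow> nat \<Rightarrow> nat \<Rightarrow> nat \<Rightarrow> (nat \<Rightarrow> nat \<Rightarrow> real) \<Rightarrow> (nat \<Rightarrow> nat \<Rightarrow> real)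
    \<Rightarrow> (nat \<Rightarrow> nat \<Rightarrow> real) \<Rightarrow> (nat \<Rightarrow> nat \<Rightarrow> real) \<Rightarrow> bool" where
  "feasible S A H t \<rho> Z Y M \<longleftrightarrow>
     \<bar>inner_SA S A \<rho> (\<lambda>s a. M s a - Z s a)\<bar> \<le> \<bar>inner_SA S A \<rho> (\<lambda>s a. Z s a - Y s a)\<bar> \<and>
     (\<forall>s<S. \<forall>a<A. \<bar>M s a\<bar> \<le> real H - real t + 1)"

definition is_minimizer :: "nat \<Rightarrow> nat \<Rightarrow> nat \<Rightarrow> nat \<Rightarrow> (nat \<Rightarrow> nat \<Rightarrow> real) \<Rightarrow> (nat \<Rightarrow> nat \<Rightarrow> real)
    \<Rightarrow> (nat \<Rightarrow> nat \<Rightarrow> real) \<Rightarrow> (nat \<Rightarrow> nat \<Rightarrow> real) \<Rightarrow> bool" where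
  "is_minimizer S A H t \<rho> Z Y M \<longleftrightarrow>
     feasible S A H t \<rho> Z Y M \<and>
     (\<forall>M'. feasible S A H t \<rho> Z Y M' \<longrightarrow> max_norm S A M \<le> max_norm S A M')"

(* Q is a possible output of the evaluation algorithm with rho_t = hat d_t on data D *)
definition valid_run :: "nat \<Rightarrow> nat \<Rightarrow> nat \<Rightarrow> (nat \<Rightarrow> nat \<Rightarrow> nat \<Rightarrow> real) \<Rightarrow> (nat \<Rightarrow> nat \<Rightarrow> nat pmf)
    \<Rightarrow> (nat \<Rightarrow> nat \<Rightarrow> nat \<Rightarrow> nat pmf) \<Rightarrow> (nat \<Rightarrow> traj) \<Rightarrow> nat
    \<Rightarrow> (nat \<Rightarrow> nat \<Rightarrow> nat \<Rightarrow> real) \<Rightarrow> bool" where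
  "valid_run S A H r pt P D K Q \<longleftrightarrow>
     (\<forall>s a. Q (Suc H) s a = 0) \<and>
     (\<forall>t\<in>{1..H}. is_minimizer S A H t (rho D K t)
         (Zmat S A r pt D K t (Q (Suc t))) (Ymat S A r pt P t (Q (Suc t))) (Q t))"

end

theory Submission
  imports Defs
begin

(* Write xi_k(s') = [s^k_{t+1} = s'] - P_t(s' | s^k_t, a^k_t) for the transition noise of the
   k-th trajectory and V(s') = sum_{a'} pi^theta_{t+1}(a' | s') Q_{t+1}(s', a').  Regrouping the sum
   over (s, a) gives <rho_t, Z_t - Y_t> = (1/K) sum_{s'} (sum_k xi_k(s')) V(s'), and the box
   constraint of the program gives |V| <= H, so the error is at most H/K times the l1-norm of
   sum_k xi_k.  That norm is the maximum over the 2^S sign patterns of a sum of K i.i.d. centred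
   variables bounded by 2; Hoeffding and a union bound over the H steps and the 2^S patterns give
   the claim with C = 4. *)

lemma sum_pmf_le_1: "finite A \<Longrightarrow> sum (pmf p) A \<le> 1"
  by (metis measure_measure_pmf_finite measure_pmf.prob_le_1)

lemma sqrt_mult_divide_self:
  fixes k x :: real
  assumes "0 \<le> k"
  shows "sqrt (k * x) / k = sqrt (x / k)"
proof (cases "k = 0")
  case False
  then have "sqrt (k * x) / k = (sqrt k * sqrt x) / (sqrt k * sqrt k)"
    using assms by (simp add: real_sqrt_mult)
  also have "\<dots> = sqrt x / sqrt k"
    using False assms by (intro nonzero_mult_divide_mult_cancel_left) simp
  finally show ?thesis
    by (simp add: real_sqrt_divide)
qed simp

lemma two_power_mult_exp_neg_ln_le:
  fixes H S :: nat and \<delta> :: real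
  assumes "H \<ge> 1" "S \<ge> 2" "0 < \<delta>" "\<delta> < 1"
  shows "real H * 2 ^ S * exp (- 2 * real S * ln (real H * real S / \<delta>)) \<le> \<delta>"
proof -
  define y where "y = \<delta> / (real H * real S)"
  have "real H * real S \<ge> 2"
    using assms(1,2) mult_mono[of 1 "real H" 2 "real S"] by simp
  then have y: "0 < y" "y \<le> 1 / 2"
    using assms(3,4) by (auto simp: y_def field_simps)
  have "ln (real H * real S / \<delta>) = - ln y"
    using y(1) assms(3) by (simp add: y_def ln_div)
  then have "exp (- 2 * real S * ln (real H * real S / \<delta>)) = exp (ln y) ^ (2 * S)"
    by (simp flip: exp_of_nat_mult)
  also have "\<dots> = y ^ S * y ^ S"
    by (simp only: exp_ln[OF y(1)] mult_2 power_add)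
  also have "\<dots> \<le> (1 / 2) ^ S * y"
    using y assms(2) power_decreasing[of 1 S y] by (intro mult_mono power_mono) auto
  finally have "real H * 2 ^ S * exp (- 2 * real S * ln (real H * real S / \<delta>))
      \<le> real H * 2 ^ S * ((1 / 2) ^ S * y)"
    by (intro mult_left_mono) auto
  also have "\<dots> = real H * y"
    by (simp add: power_one_over)
  also have "\<dots> = \<delta> / real S"
    using assms(1) by (simp add: y_def)
  also have "\<dots> \<le> \<delta>"
    using assms(2,3) by (simp add: divide_le_eq)
  finally show ?thesis .
qed

lemma Hoeffding_Pi_pmf_ge:
  fixes p :: "'a pmf" and f :: "'a \<Rightarrow> real"
  assumes "K > 0" "\<And>x. f x \<in> {a..b}" "a < b" "\<epsilon> \<ge> 0"
  shows "measure_pmf.prob (Pi_pmf {..<K} d (\<lambda>_. p))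
           {D. (\<Sum>k<K. f (D k)) \<ge> real K * measure_pmf.expectation p f + \<epsilon>}
         \<le> exp (-2 * \<epsilon>\<^sup>2 / (real K * (b - a)\<^sup>2))"
proof -
  define M where "M = Pi_pmf {..<K} d (\<lambda>_. p)"
  have component: "map_pmf (\<lambda>D. D k) M = p" if "k < K" for k
    unfolding M_def using that by (subst Pi_pmf_component) auto
  have distr_component:
    "distr (measure_pmf M) borel (\<lambda>D. f (D k)) = distr (measure_pmf p) borel f" if "k < K" for k
    unfolding component[OF that, symmetric] map_pmf_rep_eq by (subst distr_distr) (auto simp: o_def)
  interpret Hoeffding_ineq_iid "measure_pmf M" "{..<K}" "\<lambda>k D. f (D k)" "\<lambda>D. f (D 0)" a b
     "measure_pmf.expectation M (\<lambda>D. f (D 0))"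
  proof unfold_locales
    show "prob_space.indep_vars (measure_pmf M) (\<lambda>_. borel) (\<lambda>k D. f (D k)) {..<K}"
      unfolding M_def
      by (intro prob_space.indep_vars_compose2[OF _ indep_vars_Pi_pmf])
         (auto simp: measure_pmf.prob_space_axioms)
  qed (use assms distr_component in auto)
  have "measure_pmf.expectation M (\<lambda>D. f (D 0)) =
      measure_pmf.expectation (map_pmf (\<lambda>D. D 0) M) f"
    by simp
  also have "\<dots> = measure_pmf.expectation p f"
    using assms(1) by (simp add: component)
  moreover have "{..<K} \<noteq> {}"
    using assms(1) by auto
  ultimately show ?thesis
    using Hoeffding_ineq_ge[OF assms(4,3)] by (simp add: M_def)
qed

lemma st_Cons_1 [simp]: "st (x # xs, f) (Suc 0) = fst x"
  by (simp add: st_def)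

lemma st_Cons_Suc [simp]: "st (x # xs, f) (Suc (Suc i)) = st (xs, f) (Suc i)"
  by (simp add: st_def)

lemma act_Cons_1 [simp]: "act (x # xs, f) (Suc 0) = snd x"
  by (simp add: act_def)

lemma act_Cons_Suc [simp]: "act (x # xs, f) (Suc (Suc i)) = act (xs, f) (Suc i)"
  by (simp add: act_def)

lemma first_state_gen_traj: "map_pmf (\<lambda>\<tau>. st \<tau> 1) (gen_traj pb P t n s) = return_pmf s"
proof (cases n)
  case 0
  then show ?thesis by (simp add: st_def)
next
  case (Suc m)
  then show ?thesis
    by (simp add: map_bind_pmf pmf.map_comp o_def case_prod_unfold bind_pmf_const
        flip: map_pmf_def)
qed

lemma next_state_gen_traj:
  "i < n \<Longrightarrow> map_pmf (\<lambda>\<tau>. st \<tau> (Suc (Suc i))) (gen_traj pb P t n s) =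
     bind_pmf (map_pmf (\<lambda>\<tau>. (st \<tau> (Suc i), act \<tau> (Suc i))) (gen_traj pb P t n s))
       (\<lambda>(x, a). P (t + i) x a)"
proof (induction n arbitrary: t s i)
  case 0
  then show ?case by simp
next
  case (Suc n)
  show ?case
  proof (cases i)
    case 0
    have "map_pmf (\<lambda>\<tau>. st \<tau> 2) (gen_traj pb P t (Suc n) s) =
        bind_pmf (pb t s) (\<lambda>a. bind_pmf (P t s a)
          (\<lambda>s'. map_pmf (\<lambda>\<tau>. st \<tau> 1) (gen_traj pb P (Suc t) n s')))"
      by (simp add: map_bind_pmf pmf.map_comp o_def case_prod_unfold numeral_2_eq_2)
    also have "\<dots> = bind_pmf (pb t s) (P t s)"
      by (simp add: first_state_gen_traj[unfolded One_nat_def] bind_return_pmf')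
    finally show ?thesis using 0
      by (simp add: map_bind_pmf pmf.map_comp o_def case_prod_unfold bind_assoc_pmf
          bind_return_pmf bind_pmf_const numeral_2_eq_2)
  next
    case (Suc j)
    with Suc.prems have "j < n" by simp
    have "map_pmf (\<lambda>\<tau>. st \<tau> (Suc (Suc i))) (gen_traj pb P t (Suc n) s) =
        bind_pmf (pb t s) (\<lambda>a. bind_pmf (P t s a)
          (\<lambda>s'. map_pmf (\<lambda>\<tau>. st \<tau> (Suc (Suc j))) (gen_traj pb P (Suc t) n s')))"
      using Suc by (simp add: map_bind_pmf pmf.map_comp o_def case_prod_unfold)
    also have "\<dots> = bind_pmf (pb t s) (\<lambda>a. bind_pmf (P t s a) (\<lambda>s'.
        bind_pmf (map_pmf (\<lambda>\<tau>. (st \<tau> (Suc j), act \<tau> (Suc j))) (gen_traj pb P (Suc t) n s'))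
          (\<lambda>(x, a). P (Suc t + j) x a)))"
      using Suc.IH[OF \<open>j < n\<close>] by simp
    finally show ?thesis using Suc
      by (simp add: map_bind_pmf pmf.map_comp o_def case_prod_unfold bind_assoc_pmf bind_map_pmf)
  qed
qed

lemma next_state_traj_pmf:
  assumes "t \<in> {1..H}"
  shows "map_pmf (\<lambda>\<tau>. st \<tau> (Suc t)) (traj_pmf mu pb P H) =
     bind_pmf (map_pmf (\<lambda>\<tau>. (st \<tau> t, act \<tau> t)) (traj_pmf mu pb P H)) (\<lambda>(x, a). P t x a)"
proof -
  obtain i where "t = Suc i" "i < H"
    using assms by (cases t) auto
  then show ?thesis
    using next_state_gen_traj[of i H pb P 1]
    by (simp add: traj_pmf_def map_bind_pmf bind_assoc_pmf)
qed

definition traj_in_range :: "nat \<Rightarrow> nat \<Rightarrow> nat \<Rightarrow> traj \<Rightarrow> bool" where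
  "traj_in_range S A n \<tau> \<longleftrightarrow>
     length (fst \<tau>) = n \<and> set (fst \<tau>) \<subseteq> {..<S} \<times> {..<A} \<and> snd \<tau> < S"

lemma traj_in_range_gen_traj:
  assumes "\<tau> \<in> set_pmf (gen_traj pb P t n s)" "s < S"
    and "\<And>t' s. t \<le> t' \<Longrightarrow> t' < t + n \<Longrightarrow> s < S \<Longrightarrow> set_pmf (pb t' s) \<subseteq> {..<A}"
    and "\<And>t' s a. t \<le> t' \<Longrightarrow> t' < t + n \<Longrightarrow> s < S \<Longrightarrow> a < A \<Longrightarrow> set_pmf (P t' s a) \<subseteq> {..<S}"
  shows "traj_in_range S A n \<tau>"
  using assms
proof (induction n arbitrary: t s \<tau>)
  case 0
  then show ?case by (simp add: traj_in_range_def)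
next
  case (Suc n)
  then obtain a s' \<tau>' where a: "a \<in> set_pmf (pb t s)" and s': "s' \<in> set_pmf (P t s a)"
    and \<tau>': "\<tau>' \<in> set_pmf (gen_traj pb P (Suc t) n s')"
    and \<tau>: "\<tau> = ((s, a) # fst \<tau>', snd \<tau>')"
    by (auto simp: case_prod_unfold)
  have "a < A" "s' < S"
    using a s' Suc.prems(2-4) by fastforce+
  moreover have "traj_in_range S A n \<tau>'"
    using Suc.IH[OF \<tau>' \<open>s' < S\<close>] Suc.prems(3,4) by simp
  ultimately show ?case
    using \<tau> Suc.prems(2) by (simp add: traj_in_range_def)
qed

lemma traj_in_range_sample:
  assumes "D \<in> set_pmf (sample_pmf K mu pb P H)" "k < K"
    and "set_pmf mu \<subseteq> {..<S}"
    and "\<forall>t\<in>{1..H}. \<forall>s<S. set_pmf (pb t s) \<subseteq> {..<A}"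
    and "\<forall>t\<in>{1..H}. \<forall>s<S. \<forall>a<A. set_pmf (P t s a) \<subseteq> {..<S}"
  shows "traj_in_range S A H (D k)"
proof -
  have "D k \<in> set_pmf (traj_pmf mu pb P H)"
    using assms(1,2) by (auto simp: sample_pmf_def set_Pi_pmf PiE_dflt_def)
  then obtain s where "s \<in> set_pmf mu" "D k \<in> set_pmf (gen_traj pb P 1 H s)"
    by (auto simp: traj_pmf_def)
  then show ?thesis
    using assms(3-5) by (intro traj_in_range_gen_traj[of "D k" pb P 1 H s]) auto
qed

lemma st_act_less_if_traj_in_range:
  assumes "traj_in_range S A H \<tau>" "t \<in> {1..H}"
  shows "st \<tau> t < S" "act \<tau> t < A" "st \<tau> (Suc t) < S"
proof -
  have "fst \<tau> ! (t - 1) \<in> {..<S} \<times> {..<A}"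
    using assms by (auto simp: traj_in_range_def)
  then show "st \<tau> t < S" "act \<tau> t < A"
    using assms by (auto simp: traj_in_range_def st_def act_def)
  have "fst \<tau> ! t \<in> {..<S} \<times> {..<A}" if "t < H"
    using assms that by (auto simp: traj_in_range_def)
  then show "st \<tau> (Suc t) < S"
    using assms by (auto simp: traj_in_range_def st_def)
qed

definition transition_noise ::
    "(nat \<Rightarrow> nat \<Rightarrow> nat \<Rightarrow> nat pmf) \<Rightarrow> nat \<Rightarrow> traj \<Rightarrow> nat \<Rightarrow> real" where
  "transition_noise P t \<tau> s' = of_bool (st \<tau> (Suc t) = s') - pmf (P t (st \<tau> t) (act \<tau> t)) s'"

lemma abs_transition_noise_le:
  "\<bar>transition_noise P t \<tau> s'\<bar> \<le> of_bool (st \<tau> (Suc t) = s') + pmf (P t (st \<tau> t) (act \<tau> t)) s'"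
  using pmf_nonneg[of "P t (st \<tau> t) (act \<tau> t)" s'] pmf_le_1[of "P t (st \<tau> t) (act \<tau> t)" s']
  by (auto simp: transition_noise_def)

lemma integrable_transition_noise:
  "integrable (measure_pmf p) (\<lambda>\<tau>. transition_noise P t \<tau> s')"
  unfolding transition_noise_def
  by (intro Bochner_Integration.integrable_diff measure_pmf.integrable_const_bound[where B = 1])
    (auto simp: pmf_le_1)

lemma expectation_transition_noise:
  assumes "t \<in> {1..H}"
  shows "measure_pmf.expectation (traj_pmf mu pb P H) (\<lambda>\<tau>. transition_noise P t \<tau> s') = 0"
proof -
  let ?T = "traj_pmf mu pb P H"
  have "measure_pmf.expectation ?T (\<lambda>\<tau>. of_bool (st \<tau> (Suc t) = s'))
      = pmf (map_pmf (\<lambda>\<tau>. st \<tau> (Suc t)) ?T) s'"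
  proof -
    have ind: "(\<lambda>\<tau>. of_bool (st \<tau> (Suc t) = s')) =
        indicator ((\<lambda>\<tau>. st \<tau> (Suc t)) -` {s'})"
      by (auto simp: indicator_def)
    show ?thesis
      unfolding ind pmf_map by simp
  qed
  also have "\<dots> = measure_pmf.expectation ?T (\<lambda>\<tau>. pmf (P t (st \<tau> t) (act \<tau> t)) s')"
    unfolding next_state_traj_pmf[OF assms] pmf_bind by (simp add: case_prod_unfold)
  moreover have "integrable (measure_pmf ?T) (\<lambda>\<tau>. of_bool (st \<tau> (Suc t) = s') :: real)"
    by (rule measure_pmf.integrable_const_bound[where B = 1]) auto
  moreover have "integrable (measure_pmf ?T) (\<lambda>\<tau>. pmf (P t (st \<tau> t) (act \<tau> t)) s')"
    by (rule measure_pmf.integrable_const_bound[where B = 1]) (auto simp: pmf_le_1)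
  ultimately show ?thesis
    by (simp add: transition_noise_def)
qed

lemma rho_mult_Zmat_minus_Ymat:
  "rho D K t s a * (Zmat S A r pt D K t Qn s a - Ymat S A r pt P t Qn s a) =
   (\<Sum>k<K. of_bool (st (D k) t = s \<and> act (D k) t = a) *
      (\<Sum>s'<S. transition_noise P t (D k) s' * Vfun A pt (Suc t) Qn s')) / real K"
proof -
  define I where "I = {k \<in> {..<K}. st (D k) t = s \<and> act (D k) t = a}"
  define V where "V = Vfun A pt (Suc t) Qn"
  define p where "p = pmf (P t s a)"
  define N where "N s' = card (I \<inter> {k. st (D k) (Suc t) = s'})" for s'
  have "finite I"
    by (simp add: I_def)
  have cnt: "cnt D K t s a = card I"
    by (simp add: cnt_def I_def)
  have cnt3: "cnt3 D K t s a s' = N s'" for s'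
    unfolding cnt3_def N_def I_def by (rule arg_cong[where f = card]) auto
  have "(\<Sum>k<K. of_bool (st (D k) t = s \<and> act (D k) t = a) *
          (\<Sum>s'<S. transition_noise P t (D k) s' * V s'))
      = (\<Sum>k\<in>I. \<Sum>s'<S. (of_bool (st (D k) (Suc t) = s') - p s') * V s')"
    unfolding sum_of_bool_mult_eq[OF finite_lessThan]
    by (rule sum.cong) (auto simp: I_def transition_noise_def p_def)
  also have "\<dots> = (\<Sum>s'<S. (real (N s') - real (card I) * p s') * V s')"
    using \<open>finite I\<close>
    by (subst sum.swap)
      (simp add: N_def sum_subtractf left_diff_distrib mult.assoc flip: sum_distrib_right)
  finally have rhs: "(\<Sum>k<K. of_bool (st (D k) t = s \<and> act (D k) t = a) *
          (\<Sum>s'<S. transition_noise P t (D k) s' * V s'))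
      = (\<Sum>s'<S. (real (N s') - real (card I) * p s') * V s')" .
  show ?thesis
  proof (cases "card I = 0")
    case True
    then have "I = {}"
      using \<open>finite I\<close> by simp
    then show ?thesis
      unfolding V_def[symmetric] rhs by (simp add: rho_def cnt N_def)
  next
    case False
    then show ?thesis
      unfolding V_def[symmetric] rhs
      by (simp add: rho_def cnt Zmat_def Ymat_def Phat_def cnt3 sum_subtractf
          left_diff_distrib field_simps sum_divide_distrib sum_distrib_left
          flip: V_def p_def)
  qed
qed

lemma inner_SA_Zmat_minus_Ymat:
  assumes "\<And>k. k < K \<Longrightarrow> st (D k) t < S \<and> act (D k) t < A"
  shows "inner_SA S A (rho D K t) (\<lambda>s a. Zmat S A r pt D K t Qn s a - Ymat S A r pt P t Qn s a) =
    (\<Sum>s'<S. (\<Sum>k<K. transition_noise P t (D k) s') * Vfun A pt (Suc t) Qn s') / real K"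
proof -
  define N where "N k = (\<Sum>s'<S. transition_noise P t (D k) s' * Vfun A pt (Suc t) Qn s')" for k
  have visit_once: "(\<Sum>s<S. \<Sum>a<A. of_bool (st (D k) t = s \<and> act (D k) t = a)) = (1::real)"
    if "k < K" for k
    using assms[OF that]
    by (simp add: of_bool_conj flip: sum_distrib_left)
  have "inner_SA S A (rho D K t) (\<lambda>s a. Zmat S A r pt D K t Qn s a - Ymat S A r pt P t Qn s a) =
    (\<Sum>s<S. \<Sum>a<A. \<Sum>k<K. of_bool (st (D k) t = s \<and> act (D k) t = a) * N k) / real K"
    by (simp add: inner_SA_def rho_mult_Zmat_minus_Ymat N_def sum_divide_distrib)
  also have "(\<Sum>s<S. \<Sum>a<A. \<Sum>k<K. of_bool (st (D k) t = s \<and> act (D k) t = a) * N k) =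
      (\<Sum>k<K. (\<Sum>s<S. \<Sum>a<A. of_bool (st (D k) t = s \<and> act (D k) t = a)) * N k)"
    by (simp only: sum.swap[of _ "{..<K}"] sum_distrib_right)
  also have "\<dots> = (\<Sum>k<K. N k)"
    by (rule sum.cong) (simp_all only: visit_once lessThan_iff mult_1)
  finally show ?thesis
    by (simp add: N_def sum.swap[of _ "{..<K}"] sum_distrib_right)
qed

definition deviation_l1 ::
    "(nat \<Rightarrow> nat \<Rightarrow> nat \<Rightarrow> nat pmf) \<Rightarrow> nat \<Rightarrow> (nat \<Rightarrow> traj) \<Rightarrow> nat \<Rightarrow> nat \<Rightarrow> real" where
  "deviation_l1 P S D K t = (\<Sum>s'<S. \<bar>\<Sum>k<K. transition_noise P t (D k) s'\<bar>)"

lemma abs_Vfun_le: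
  assumes "0 \<le> c" "\<And>a. a < A \<Longrightarrow> \<bar>Q s a\<bar> \<le> c"
  shows "\<bar>Vfun A pt t Q s\<bar> \<le> c"
proof -
  have "\<bar>Vfun A pt t Q s\<bar> \<le> (\<Sum>a<A. pmf (pt t s) a * c)"
    unfolding Vfun_def using assms(2)
    by (intro order.trans[OF sum_abs] sum_mono) (auto simp: abs_mult intro: mult_left_mono)
  also have "\<dots> = sum (pmf (pt t s)) {..<A} * c"
    by (simp add: sum_distrib_right)
  also have "\<dots> \<le> c"
    using assms(1) by (intro mult_left_le_one_le sum_pmf_le_1 sum_nonneg) auto
  finally show ?thesis .
qed

lemma abs_Q_le_horizon:
  assumes "valid_run S A H r pt P D K Q" "t \<in> {1..H}" "s < S" "a < A"
  shows "\<bar>Q (Suc t) s a\<bar> \<le> real H"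
proof (cases "t = H")
  case True
  then show ?thesis
    using assms(1) by (simp add: valid_run_def)
next
  case False
  then have "Suc t \<in> {1..H}"
    using assms(2) by auto
  with assms(1) have "\<forall>s<S. \<forall>a<A. \<bar>Q (Suc t) s a\<bar> \<le> real H - real (Suc t) + 1"
    unfolding valid_run_def is_minimizer_def feasible_def by blast
  then have "\<bar>Q (Suc t) s a\<bar> \<le> real H - real (Suc t) + 1"
    using assms(3,4) by blast
  then show ?thesis
    by simp
qed

lemma abs_inner_SA_Zmat_minus_Ymat_le:
  assumes "valid_run S A H r pt P D K Q" "t \<in> {1..H}"
    and "\<And>k. k < K \<Longrightarrow> st (D k) t < S \<and> act (D k) t < A"
  shows "\<bar>inner_SA S A (rho D K t)
            (\<lambda>s a. Zmat S A r pt D K t (Q (Suc t)) s a - Ymat S A r pt P t (Q (Suc t)) s a)\<bar>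
         \<le> real H / real K * deviation_l1 P S D K t"
proof -
  have "\<bar>Vfun A pt (Suc t) (Q (Suc t)) s'\<bar> \<le> real H" if "s' < S" for s'
    using abs_Q_le_horizon[OF assms(1,2) that] by (intro abs_Vfun_le) auto
  then have "\<bar>\<Sum>s'<S. (\<Sum>k<K. transition_noise P t (D k) s') * Vfun A pt (Suc t) (Q (Suc t)) s'\<bar>
      \<le> real H * deviation_l1 P S D K t"
    unfolding deviation_l1_def sum_distrib_left
    by (intro order.trans[OF sum_abs] sum_mono)
      (auto simp: abs_mult mult.commute[of "real H"] intro: mult_left_mono)
  moreover have "inner_SA S A (rho D K t)
            (\<lambda>s a. Zmat S A r pt D K t (Q (Suc t)) s a - Ymat S A r pt P t (Q (Suc t)) s a) =
     (\<Sum>s'<S. (\<Sum>k<K. transition_noise P t (D k) s') * Vfun A pt (Suc t) (Q (Suc t)) s') / real K"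
    by (rule inner_SA_Zmat_minus_Ymat[OF assms(3)])
  ultimately show ?thesis
    by (simp add: divide_right_mono)
qed

definition signed_noise ::
    "(nat \<Rightarrow> nat \<Rightarrow> nat \<Rightarrow> nat pmf) \<Rightarrow> nat \<Rightarrow> nat \<Rightarrow> nat set \<Rightarrow> traj \<Rightarrow> real" where
  "signed_noise P S t B \<tau> = (\<Sum>s'<S. (if s' \<in> B then 1 else -1) * transition_noise P t \<tau> s')"

lemma deviation_l1_eq_sum_signed_noise:
  "deviation_l1 P S D K t =
     (\<Sum>k<K. signed_noise P S t {s'. s' < S \<and> 0 \<le> (\<Sum>k<K. transition_noise P t (D k) s')} (D k))"
proof -
  define X where "X s' = (\<Sum>k<K. transition_noise P t (D k) s')" for s'
  have "(\<Sum>k<K. signed_noise P S t {s'. s' < S \<and> 0 \<le> X s'} (D k)) =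
      (\<Sum>s'<S. (if 0 \<le> X s' then 1 else -1) * X s')"
    unfolding signed_noise_def X_def by (subst sum.swap) (simp add: sum_distrib_left)
  also have "\<dots> = deviation_l1 P S D K t"
    unfolding deviation_l1_def X_def[symmetric] by (intro sum.cong) auto
  finally show ?thesis
    by (simp add: X_def)
qed

lemma abs_signed_noise_le: "\<bar>signed_noise P S t B \<tau>\<bar> \<le> 2"
proof -
  let ?p = "pmf (P t (st \<tau> t) (act \<tau> t))"
  have "\<bar>signed_noise P S t B \<tau>\<bar> \<le> (\<Sum>s'<S. of_bool (st \<tau> (Suc t) = s') + ?p s')"
    unfolding signed_noise_def
    by (intro order.trans[OF sum_abs] sum_mono) (simp add: abs_mult abs_transition_noise_le)
  also have "\<dots> = of_bool (st \<tau> (Suc t) < S) + sum ?p {..<S}"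
    by (simp add: sum.distrib of_bool_def)
  also have "\<dots> \<le> 2"
    using sum_pmf_le_1[of "{..<S}" "P t (st \<tau> t) (act \<tau> t)"] by simp
  finally show ?thesis .
qed

lemma expectation_signed_noise:
  assumes "t \<in> {1..H}"
  shows "measure_pmf.expectation (traj_pmf mu pb P H) (signed_noise P S t B) = 0"
  unfolding signed_noise_def
  by (simp add: integrable_transition_noise expectation_transition_noise[OF assms])

lemma prob_signed_noise_ge:
  assumes "K > 0" "\<epsilon> \<ge> 0" "t \<in> {1..H}"
  shows "measure_pmf.prob (sample_pmf K mu pb P H)
           {D. \<epsilon> \<le> (\<Sum>k<K. signed_noise P S t B (D k))}
         \<le> exp (- \<epsilon>\<^sup>2 / (8 * real K))"
proof -
  have "signed_noise P S t B \<tau> \<in> {-2..2}" for \<tau>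
    using abs_signed_noise_le[of P S t B \<tau>] by (simp add: abs_le_iff)
  from Hoeffding_Pi_pmf_ge[where f = "signed_noise P S t B" and p = "traj_pmf mu pb P H"
      and d = "([], 0)", OF assms(1) this _ assms(2)]
  show ?thesis
    by (simp add: sample_pmf_def expectation_signed_noise[OF assms(3)] power2_eq_square)
qed

lemma prob_deviation_l1_ge:
  assumes "K > 0" "\<epsilon> \<ge> 0"
  shows "measure_pmf.prob (sample_pmf K mu pb P H)
           {D. \<exists>t\<in>{1..H}. \<epsilon> \<le> deviation_l1 P S D K t}
         \<le> real H * 2 ^ S * exp (- \<epsilon>\<^sup>2 / (8 * real K))"
proof -
  let ?M = "sample_pmf K mu pb P H"
  let ?E = "\<lambda>t B. {D. \<epsilon> \<le> (\<Sum>k<K. signed_noise P S t B (D k))}"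
  have "{D. \<exists>t\<in>{1..H}. \<epsilon> \<le> deviation_l1 P S D K t} \<subseteq>
      (\<Union>t\<in>{1..H}. \<Union>B\<in>Pow {..<S}. ?E t B)"
  proof clarify
    fix D t
    assume "t \<in> {1..H}" "\<epsilon> \<le> deviation_l1 P S D K t"
    moreover have "{s'. s' < S \<and> 0 \<le> (\<Sum>k<K. transition_noise P t (D k) s')} \<in> Pow {..<S}"
      by auto
    ultimately show "D \<in> (\<Union>t\<in>{1..H}. \<Union>B\<in>Pow {..<S}. ?E t B)"
      unfolding deviation_l1_eq_sum_signed_noise by blast
  qed
  then have "measure_pmf.prob ?M {D. \<exists>t\<in>{1..H}. \<epsilon> \<le> deviation_l1 P S D K t}
      \<le> measure_pmf.prob ?M (\<Union>t\<in>{1..H}. \<Union>B\<in>Pow {..<S}. ?E t B)"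
    by (rule measure_pmf.finite_measure_mono) simp
  also have "\<dots> \<le> (\<Sum>t\<in>{1..H}. \<Sum>B\<in>Pow {..<S}. measure_pmf.prob ?M (?E t B))"
    by (intro order.trans[OF measure_pmf.finite_measure_subadditive_finite] sum_mono
        measure_pmf.finite_measure_subadditive_finite) auto
  also have "\<dots> \<le> (\<Sum>t\<in>{1..H}. \<Sum>B\<in>Pow {..<S}. exp (- \<epsilon>\<^sup>2 / (8 * real K)))"
    using assms by (intro sum_mono prob_signed_noise_ge) auto
  also have "\<dots> = real H * 2 ^ S * exp (- \<epsilon>\<^sup>2 / (8 * real K))"
    by (simp add: card_Pow)
  finally show ?thesis .
qed

lemma deviation_l1_single_state:
  assumes "\<And>k. k < K \<Longrightarrow> st (D k) (Suc t) = 0"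
    and "\<And>k. k < K \<Longrightarrow> set_pmf (P t (st (D k) t) (act (D k) t)) \<subseteq> {0}"
  shows "deviation_l1 P 1 D K t = 0"
  using assms by (simp add: deviation_l1_def transition_noise_def set_pmf_subset_singleton)

lemma prob_deviation_l1_le:
  assumes "S \<ge> 1" "0 < \<delta>" "\<delta> < 1"
    and "set_pmf mu \<subseteq> {..<S}"
    and "\<forall>t\<in>{1..H}. \<forall>s<S. set_pmf (pb t s) \<subseteq> {..<A}"
    and "\<forall>t\<in>{1..H}. \<forall>s<S. \<forall>a<A. set_pmf (P t s a) \<subseteq> {..<S}"
  shows "1 - \<delta> \<le> measure_pmf.prob (sample_pmf K mu pb P H)
      {D. \<forall>t\<in>{1..H}.
            deviation_l1 P S D K t \<le> 4 * sqrt (real K * (real S * ln (real H * real S / \<delta>)))}"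
    (is "_ \<le> measure_pmf.prob ?M {D. \<forall>t\<in>{1..H}. deviation_l1 P S D K t \<le> ?\<epsilon>}")
proof -
  let ?G = "{D. \<forall>t\<in>{1..H}. deviation_l1 P S D K t \<le> ?\<epsilon>}"
  define L where "L = ln (real H * real S / \<delta>)"
  have L_nonneg: "0 \<le> L" if "H \<ge> 1"
    using that assms(1-3) mult_mono[of 1 "real H" 1 "real S"] by (simp add: L_def)
  consider "H = 0 \<or> K = 0" | "H \<ge> 1" "S = 1" | "H \<ge> 1" "K \<ge> 1" "S \<ge> 2"
    using assms(1) by linarith
  then show ?thesis
  proof cases
    case 1
    then have "?G = UNIV"
      by (auto simp: deviation_l1_def)
    then show ?thesis
      using assms(2) by simp
  next
    case 2
    \<comment> \<open>The union bound is too weak here, but with a single state the noise vanishes.\<close>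
    have "D \<in> ?G" if D: "D \<in> set_pmf ?M" for D
    proof (intro CollectI ballI)
      fix t
      assume t: "t \<in> {1..H}"
      have "st (D k) t < 1 \<and> act (D k) t < A \<and> st (D k) (Suc t) < 1" if "k < K" for k
        using st_act_less_if_traj_in_range[OF traj_in_range_sample[OF D that assms(4-6)] t] 2(2)
        by simp
      then have "deviation_l1 P 1 D K t = 0"
        using assms(6) t 2(2) by (intro deviation_l1_single_state) (auto simp: lessThan_Suc)
      then show "deviation_l1 P S D K t \<le> ?\<epsilon>"
        using L_nonneg 2 by (simp add: L_def)
    qed
    then have "measure_pmf.prob ?M ?G = 1"
      by (simp add: measure_pmf.prob_eq_1 AE_measure_pmf_iff)
    then show ?thesis
      using assms(2) by simp
  next
    case 3
    define \<epsilon> where "\<epsilon> = ?\<epsilon>"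
    have "0 \<le> \<epsilon>"
      using L_nonneg 3 by (simp add: \<epsilon>_def flip: L_def)
    have exponent: "\<epsilon>\<^sup>2 / (8 * real K) = 2 * real S * L"
      using L_nonneg 3 by (simp add: \<epsilon>_def L_def power_mult_distrib)
    have "UNIV - ?G \<subseteq> {D. \<exists>t\<in>{1..H}. \<epsilon> \<le> deviation_l1 P S D K t}"
      by (force simp: \<epsilon>_def not_le)
    then have "measure_pmf.prob ?M (UNIV - ?G)
        \<le> measure_pmf.prob ?M {D. \<exists>t\<in>{1..H}. \<epsilon> \<le> deviation_l1 P S D K t}"
      by (rule measure_pmf.finite_measure_mono) simp
    also have "\<dots> \<le> real H * 2 ^ S * exp (- 2 * real S * L)"
      using prob_deviation_l1_ge[of K \<epsilon>] 3 \<open>0 \<le> \<epsilon>\<close> by (simp add: exponent)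
    also have "\<dots> \<le> \<delta>"
      unfolding L_def using 3(1,3) assms(2,3) by (rule two_power_mult_exp_neg_ln_le)
    finally show ?thesis
      using measure_pmf.prob_compl[of ?G ?M] by simp
  qed
qed

lemma prob_abs_inner_SA_Zmat_minus_Ymat_le:
  assumes "S \<ge> 1" "0 < \<delta>" "\<delta> < 1"
    and "set_pmf mu \<subseteq> {..<S}"
    and "\<forall>t\<in>{1..H}. \<forall>s<S. set_pmf (pb t s) \<subseteq> {..<A}"
    and "\<forall>t\<in>{1..H}. \<forall>s<S. \<forall>a<A. set_pmf (P t s a) \<subseteq> {..<S}"
  shows "1 - \<delta> \<le> measure_pmf.prob (sample_pmf K mu pb P H)
      {D. \<forall>Q. valid_run S A H r pt P D K Q \<longrightarrow>
            (\<forall>t\<in>{1..H}.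
               \<bar>inner_SA S A (rho D K t)
                  (\<lambda>s a. Zmat S A r pt D K t (Q (Suc t)) s a - Ymat S A r pt P t (Q (Suc t)) s a)\<bar>
               \<le> 4 * real H * sqrt (real S * ln (real H * real S / \<delta>) / real K))}"
    (is "_ \<le> measure_pmf.prob ?M ?Good")
proof -
  let ?X = "real S * ln (real H * real S / \<delta>)"
  let ?\<epsilon> = "4 * sqrt (real K * ?X)"
  have "real H / real K * ?\<epsilon> = 4 * real H * (sqrt (real K * ?X) / real K)"
    by simp
  also have "\<dots> = 4 * real H * sqrt (?X / real K)"
    by (simp only: sqrt_mult_divide_self[OF of_nat_0_le_iff])
  finally have bound_eq: "real H / real K * ?\<epsilon> = 4 * real H * sqrt (?X / real K)" .
  have "1 - \<delta> \<le> measure_pmf.prob ?M {D. \<forall>t\<in>{1..H}. deviation_l1 P S D K t \<le> ?\<epsilon>}"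
    using assms by (rule prob_deviation_l1_le)
  also have "\<dots> \<le> measure_pmf.prob ?M ?Good"
  proof (rule measure_pmf.finite_measure_mono_AE)
    have "\<bar>inner_SA S A (rho D K t)
            (\<lambda>s a. Zmat S A r pt D K t (Q (Suc t)) s a - Ymat S A r pt P t (Q (Suc t)) s a)\<bar>
          \<le> 4 * real H * sqrt (?X / real K)"
      if D: "D \<in> set_pmf ?M" and deviation: "\<forall>t\<in>{1..H}. deviation_l1 P S D K t \<le> ?\<epsilon>"
        and run: "valid_run S A H r pt P D K Q" and t: "t \<in> {1..H}" for D Q t
    proof -
      have "st (D k) t < S \<and> act (D k) t < A" if "k < K" for k
        using st_act_less_if_traj_in_range[OF traj_in_range_sample[OF D that assms(4-6)] t] by blast
      with run t have "\<bar>inner_SA S A (rho D K t)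
            (\<lambda>s a. Zmat S A r pt D K t (Q (Suc t)) s a - Ymat S A r pt P t (Q (Suc t)) s a)\<bar>
          \<le> real H / real K * deviation_l1 P S D K t"
        by (rule abs_inner_SA_Zmat_minus_Ymat_le)
      also have "\<dots> \<le> real H / real K * ?\<epsilon>"
        using deviation t by (intro mult_left_mono) auto
      finally show ?thesis
        by (simp only: bound_eq)
    qed
    then show "AE D in ?M. D \<in> {D. \<forall>t\<in>{1..H}. deviation_l1 P S D K t \<le> ?\<epsilon>} \<longrightarrow> D \<in> ?Good"
      by (auto simp: AE_measure_pmf_iff)
  qed simp
  finally show ?thesis .
qed

theorem lemma4:
  shows "\<exists>C>0. \<forall>(S::nat) (A::nat) (H::nat) (K::nat) (\<delta>::real)
      (mu :: nat pmf) (pb :: nat \<Rightarrow> nat \<Rightarrow> nat pmf) (pt :: nat \<Rightarrow> nat \<Rightarrow> nat pmf)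
      (P :: nat \<Rightarrow> nat \<Rightarrow> nat \<Rightarrow> nat pmf) (r :: nat \<Rightarrow> nat \<Rightarrow> nat \<Rightarrow> real).
    S \<ge> 1 \<longrightarrow> A \<ge> 1 \<longrightarrow>
    set_pmf mu \<subseteq> {..<S} \<longrightarrow>
    (\<forall>t\<in>{1..H}. \<forall>s<S. set_pmf (pb t s) \<subseteq> {..<A}) \<longrightarrow>
    (\<forall>t\<in>{1..Suc H}. \<forall>s<S. set_pmf (pt t s) \<subseteq> {..<A}) \<longrightarrow>
    (\<forall>t\<in>{1..H}. \<forall>s<S. \<forall>a<A. set_pmf (P t s a) \<subseteq> {..<S}) \<longrightarrow>
    (\<forall>t\<in>{1..H}. \<forall>s<S. \<forall>a<A. 0 \<le> r t s a \<and> r t s a \<le> 1) \<longrightarrow>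
    0 < \<delta> \<longrightarrow> \<delta> < 1 \<longrightarrow>
    measure_pmf.prob (sample_pmf K mu pb P H)
      {D. \<forall>Q. valid_run S A H r pt P D K Q \<longrightarrow>
            (\<forall>t\<in>{1..H}.
               \<bar>inner_SA S A (rho D K t)
                  (\<lambda>s a. Zmat S A r pt D K t (Q (Suc t)) s a - Ymat S A r pt P t (Q (Suc t)) s a)\<bar>
               \<le> C * real H * sqrt (real S * ln (real H * real S / \<delta>) / real K))}
      \<ge> 1 - \<delta>"
  by (intro exI[of _ "4 :: real"] conjI allI impI prob_abs_inner_SA_Zmat_minus_Ymat_le) auto

end
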